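(* Let $D$ be a digraph with $\mathrm{ddp}(D)=k$. Then there exists a valid DAG-depth decomposition of $D$ of depth $k$.
   Context: A reachable fragment of a digraph $D$ is a vertex set $R\subseteq V(D)$, maximal by inclusion, that contains a vertex from which every vertex of $R$ is reachable by a directed path in $D$; it is regarded as the induced subdigraph $D[R]$. The DAG-depth $\mathrm{ddp}(D)$ is defined recursively: $\mathrm{ddp}(D)=1$ if $|V(D)|=1$; if $D$ has exactly one reachable fragment and $|V(D)|>1$, then $\mathrm{ddp}(D)=1+\min_{v\in V(D)}\mathrm{ddp}(D-v)$; otherwise, with reachable fragments $R_1,\dots,R_p$, $\mathrm{ddp}(D)=\max_i\mathrm{ddp}(D[R_i])$. A DAG-depth decomposition of $D$ is a pair $(P,\mathrm{org})$ with $P$ a directed acyclic graph and $\mathrm{org}:V(P)\to V(D)$ surjective. Roots of $P$ are vertices of indegree $0$; $w'$ is a descendant of $v'$ if $P$ has a directed path from $v'$ to $w'$. The depth of $P$ is the maximum number of vertices on a directed path in $P$. The decomposition is valid if for every $v'\in V(P)$ with $\mathrm{org}(v')=v$ and every $u\in N^+_D(v)$, either (1) some $u'$ with $\mathrm{org}(u')=u$ is a descendant of $v'$ in $P$, or (2) every directed path in $P$ from a root of $P$ to $v'$ contains a vertex $u'$ with $\mathrm{org}(u')=u$. *)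

theory Defs
  imports Main
begin

text \<open>A digraph is a finite vertex set V together with an arc relation E \<subseteq> V \<times> V.\<close>

definition restr :: "('a \<times> 'a) set \<Rightarrow> 'a set \<Rightarrow> ('a \<times> 'a) set" where
  "restr E R = E \<inter> (R \<times> R)"

definition rooted_in :: "'a set \<Rightarrow> ('a \<times> 'a) set \<Rightarrow> 'a set \<Rightarrow> bool" where
  "rooted_in V E R \<longleftrightarrow> R \<subseteq> V \<and> (\<exists>r\<in>R. \<forall>x\<in>R. (r, x) \<in> (restr E V)\<^sup>*)"

definition fragments :: "'a set \<Rightarrow> ('a \<times> 'a) set \<Rightarrow> 'a set set" where
  "fragments V E = {R. rooted_in V E R \<and> (\<forall>R'. rooted_in V E R' \<and> R \<subseteq> R' \<longrightarrow> R' = R)}"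

lemma fragment_proper:
  assumes "R \<in> fragments V E" "card (fragments V E) \<noteq> 1"
  shows "R \<subset> V"
proof -
  have "R \<subseteq> V" using assms(1) by (auto simp: fragments_def rooted_in_def)
  moreover have "R \<noteq> V"
  proof
    assume RV: "R = V"
    have "fragments V E = {R}"
    proof
      show "fragments V E \<subseteq> {R}"
      proof
        fix R' assume "R' \<in> fragments V E"
        then have "R' \<subseteq> V" "\<forall>R''. rooted_in V E R'' \<and> R' \<subseteq> R'' \<longrightarrow> R'' = R'"
          by (auto simp: fragments_def rooted_in_def)
        moreover have "rooted_in V E R" using assms(1) by (simp add: fragments_def)
        ultimately show "R' \<in> {R}" using RV by auto
      qed
    qed (use assms(1) in auto)
    then show False using assms(2) by simp
  qed
  ultimately show ?thesis by auto
qed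

function ddp :: "'a set \<Rightarrow> ('a \<times> 'a) set \<Rightarrow> nat" where
  "ddp V E =
    (if \<not> finite V \<or> V = {} then 0
     else if card V = 1 then 1
     else if card (fragments V E) = 1
       then 1 + Min ((\<lambda>v. ddp (V - {v}) (restr E (V - {v}))) ` V)
     else Max ((\<lambda>R. ddp R (restr E R)) ` fragments V E))"
  by pat_completeness auto
termination
proof (relation "measure (\<lambda>(V, E). card V)")
  show "wf (measure (\<lambda>(V, E). card V))" by simp
next
  fix V :: "'a set" and E v
  assume "\<not> (\<not> finite V \<or> V = {})" "v \<in> V"
  then show "((V - {v}, restr E (V - {v})), V, E) \<in> measure (\<lambda>(V, E). card V)"
    by (simp add: card_gt_0_iff)
next
  fix V :: "'a set" and E R
  assume "\<not> (\<not> finite V \<or> V = {})" "card (fragments V E) \<noteq> 1" "R \<in> fragments V E"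
  then show "((R, restr E R), V, E) \<in> measure (\<lambda>(V, E). card V)"
    using fragment_proper[of R V E] by (simp add: psubset_card_mono)
qed

definition dpath :: "('b \<times> 'b) set \<Rightarrow> 'b list \<Rightarrow> bool" where
  "dpath A xs \<longleftrightarrow> xs \<noteq> [] \<and> (\<forall>i. Suc i < length xs \<longrightarrow> (xs ! i, xs ! Suc i) \<in> A)"

definition is_root :: "'b set \<Rightarrow> ('b \<times> 'b) set \<Rightarrow> 'b \<Rightarrow> bool" where
  "is_root VP A x \<longleftrightarrow> x \<in> VP \<and> (\<forall>y. (y, x) \<notin> A)"

definition descendant :: "('b \<times> 'b) set \<Rightarrow> 'b \<Rightarrow> 'b \<Rightarrow> bool" where
  "descendant A v' w' \<longleftrightarrow> (\<exists>xs. dpath A xs \<and> hd xs = v' \<and> last xs = w')"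

definition dag :: "'b set \<Rightarrow> ('b \<times> 'b) set \<Rightarrow> bool" where
  "dag VP A \<longleftrightarrow> finite VP \<and> A \<subseteq> VP \<times> VP \<and> acyclic A"

definition depth :: "'b set \<Rightarrow> ('b \<times> 'b) set \<Rightarrow> nat \<Rightarrow> bool" where
  "depth VP A k \<longleftrightarrow> (\<exists>xs. dpath A xs \<and> set xs \<subseteq> VP \<and> length xs = k)
                   \<and> (\<forall>xs. dpath A xs \<and> set xs \<subseteq> VP \<longrightarrow> length xs \<le> k)"

definition valid_decomp ::
  "'a set \<Rightarrow> ('a \<times> 'a) set \<Rightarrow> 'b set \<Rightarrow> ('b \<times> 'b) set \<Rightarrow> ('b \<Rightarrow> 'a) \<Rightarrow> bool" where
  "valid_decomp V E VP A org \<longleftrightarrow>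
     dag VP A \<and> org ` VP = V \<and>
     (\<forall>v'\<in>VP. \<forall>u. (org v', u) \<in> E \<longrightarrow>
        (\<exists>u'\<in>VP. org u' = u \<and> descendant A v' u') \<or>
        (\<forall>xs. dpath A xs \<and> is_root VP A (hd xs) \<and> last xs = v' \<longrightarrow>
              (\<exists>u'\<in>set xs. org u' = u)))"

end

theory Submission
  imports Defs "HOL-Library.Disjoint_Sets" "HOL-Library.Nat_Bijection"
begin

text \<open>
  The decomposition is built along the recursion defining ddp. A single vertex is a one-node DAG.
  If D has several reachable fragments, each fragment is closed under out-arcs, so the disjoint
  union of decompositions of the fragments is valid and its depth is the maximum of theirs.
  If D has a single fragment and ddp D = 1 + ddp (D - v), take a decomposition of D - v and put a
  new root labelled v above all its roots: every root-to-node path now starts at the new root,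
  so arcs into v satisfy condition (2); the new root reaches every node, so arcs out of v satisfy
  condition (1); all other arcs keep the condition they had, and the depth grows by one.
  Nodes of P are natural numbers, so the recursive calls draw their node names from disjoint
  infinite subsets of \<nat>.
\<close>

lemma dpath_iff_successively:
  "dpath A xs \<longleftrightarrow> xs \<noteq> [] \<and> successively (\<lambda>x y. (x, y) \<in> A) xs"
  by (simp add: dpath_def successively_conv_nth)

lemma dpath_Cons:
  "dpath A (x # xs) \<longleftrightarrow> xs = [] \<or> (x, hd xs) \<in> A \<and> dpath A xs"
  by (auto simp: dpath_iff_successively successively_Cons)

lemma dpath_singleton [simp]: "dpath A [x]"
  by (simp add: dpath_def)

lemma dpath_imp_nonempty: "dpath A xs \<Longrightarrow> xs \<noteq> []"
  by (simp add: dpath_def)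

lemma dpath_mono: "A \<subseteq> B \<Longrightarrow> dpath A xs \<Longrightarrow> dpath B xs"
  by (auto simp: dpath_def)

lemma dpath_empty_length: "dpath {} xs \<Longrightarrow> length xs = 1"
  by (cases xs) (auto simp: dpath_Cons dpath_def)

lemma dpath_confined:
  assumes "dpath A xs" "hd xs \<in> S"
    and step: "\<And>x y. (x, y) \<in> A \<Longrightarrow> x \<in> S \<Longrightarrow> (x, y) \<in> B \<and> y \<in> S"
  shows "dpath B xs \<and> set xs \<subseteq> S"
  using assms(1,2)
proof (induction xs)
  case (Cons x xs)
  show ?case
  proof (cases xs)
    case (Cons y ys)
    with Cons.prems have "(x, y) \<in> A" "dpath A xs" by (auto simp: dpath_Cons)
    with Cons.prems \<open>xs = y # ys\<close> step have "(x, y) \<in> B" "y \<in> S" by auto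
    with Cons.IH \<open>dpath A xs\<close> \<open>xs = y # ys\<close> Cons.prems show ?thesis
      by (auto simp: dpath_Cons)
  qed (use Cons.prems in simp)
qed (simp add: dpath_def)

lemma dag_dpath_subset:
  "dag VP A \<Longrightarrow> dpath A xs \<Longrightarrow> hd xs \<in> VP \<Longrightarrow> set xs \<subseteq> VP"
  using dpath_confined[of A xs VP A] by (auto simp: dag_def)

lemma rtrancl_imp_descendant: "(a, b) \<in> A\<^sup>* \<Longrightarrow> descendant A a b"
proof (induction rule: converse_rtrancl_induct)
  case base
  show ?case unfolding descendant_def by (intro exI[of _ "[b]"]) simp
next
  case (step a c)
  then obtain xs where "dpath A xs" "hd xs = c" "last xs = b"
    unfolding descendant_def by blast
  with step(1) show ?case
    unfolding descendant_def using dpath_imp_nonempty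
    by (intro exI[of _ "a # xs"]) (auto simp: dpath_Cons)
qed

lemma descendant_mono: "A \<subseteq> B \<Longrightarrow> descendant A a b \<Longrightarrow> descendant B a b"
  unfolding descendant_def using dpath_mono by blast

lemma dag_root_above:
  assumes "dag VP A" "x \<in> VP"
  obtains \<rho> where "is_root VP A \<rho>" "(\<rho>, x) \<in> A\<^sup>*"
proof -
  have "finite A" using assms(1) unfolding dag_def by (meson finite_SigmaI finite_subset)
  then have "wf A" using assms(1) finite_acyclic_wf unfolding dag_def by blast
  then have "\<exists>\<rho>. is_root VP A \<rho> \<and> (\<rho>, x) \<in> A\<^sup>*" using assms(2)
  proof (induction x rule: wf_induct_rule)
    case (less x)
    show ?case
    proof (cases "is_root VP A x")
      case False
      then obtain y where "(y, x) \<in> A" using less.prems unfolding is_root_def by blast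
      moreover have "y \<in> VP" using calculation assms(1) unfolding dag_def by blast
      ultimately show ?thesis using less.IH by (meson rtrancl.rtrancl_into_rtrancl)
    qed blast
  qed
  then show thesis using that by blast
qed

lemma depth_longest_path_from_root:
  assumes "A \<subseteq> VP \<times> VP" "depth VP A k" "dpath A xs" "set xs \<subseteq> VP" "length xs = k"
  shows "is_root VP A (hd xs)"
  unfolding is_root_def
proof (intro conjI allI notI)
  have "xs \<noteq> []" using assms(3) by (rule dpath_imp_nonempty)
  then show "hd xs \<in> VP" using assms(4) by auto
  fix y assume "(y, hd xs) \<in> A"
  then have "dpath A (y # xs)" "set (y # xs) \<subseteq> VP"
    using assms(1,3,4) \<open>xs \<noteq> []\<close> by (auto simp: dpath_Cons)
  then have "length (y # xs) \<le> k" using assms(2) unfolding depth_def by blast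
  then show False using assms(5) by simp
qed

definition arc_ok :: "'b set \<Rightarrow> ('b \<times> 'b) set \<Rightarrow> ('b \<Rightarrow> 'a) \<Rightarrow> 'b \<Rightarrow> 'a \<Rightarrow> bool" where
  "arc_ok VP A org v' u \<longleftrightarrow>
     (\<exists>u'\<in>VP. org u' = u \<and> descendant A v' u') \<or>
     (\<forall>xs. dpath A xs \<and> is_root VP A (hd xs) \<and> last xs = v' \<longrightarrow> (\<exists>u'\<in>set xs. org u' = u))"

lemma valid_decomp_iff_arc_ok:
  "valid_decomp V E VP A org \<longleftrightarrow>
     dag VP A \<and> org ` VP = V \<and> (\<forall>v'\<in>VP. \<forall>u. (org v', u) \<in> E \<longrightarrow> arc_ok VP A org v' u)"
  by (simp add: valid_decomp_def arc_ok_def)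

lemma arc_ok_cong:
  assumes "dag VP A" "\<And>x. x \<in> VP \<Longrightarrow> org x = org' x"
  shows "arc_ok VP A org v' u \<longleftrightarrow> arc_ok VP A org' v' u"
proof -
  have "(\<exists>u'\<in>set xs. org u' = u) \<longleftrightarrow> (\<exists>u'\<in>set xs. org' u' = u)"
    if "dpath A xs" "is_root VP A (hd xs)" for xs
    using dag_dpath_subset[OF assms(1) that(1)] that(2) assms(2)
    by (intro bex_cong) (auto simp: is_root_def)
  then show ?thesis unfolding arc_ok_def using assms(2) by auto
qed

lemma valid_decomp_cong:
  assumes "\<And>x. x \<in> VP \<Longrightarrow> org x = org' x"
  shows "valid_decomp V E VP A org \<longleftrightarrow> valid_decomp V E VP A org'"
proof -
  have "org ` VP = org' ` VP" by (rule image_cong[OF refl assms])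
  moreover have "arc_ok VP A org v' u \<longleftrightarrow> arc_ok VP A org' v' u" if "dag VP A" for v' u
    using that assms by (rule arc_ok_cong)
  ultimately show ?thesis unfolding valid_decomp_iff_arc_ok using assms by auto
qed

definition add_root_arcs :: "'b \<Rightarrow> 'b set \<Rightarrow> ('b \<times> 'b) set \<Rightarrow> ('b \<times> 'b) set" where
  "add_root_arcs r VP A = A \<union> {(r, x) | x. is_root VP A x}"

context
  fixes r :: 'b and VP :: "'b set" and A :: "('b \<times> 'b) set"
  assumes arcs: "A \<subseteq> VP \<times> VP" and fresh: "r \<notin> VP"
begin

private abbreviation "A\<^sub>r \<equiv> add_root_arcs r VP A"

lemma add_root_arcs_subset: "A\<^sub>r \<subseteq> insert r VP \<times> VP"
  using arcs by (auto simp: add_root_arcs_def is_root_def)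

lemma add_root_arcs_from_old: "(x, y) \<in> A\<^sub>r \<Longrightarrow> x \<in> VP \<Longrightarrow> (x, y) \<in> A"
  using fresh by (auto simp: add_root_arcs_def)

lemma is_root_add_root_arcs_iff: "is_root (insert r VP) A\<^sub>r x \<longleftrightarrow> x = r"
  using add_root_arcs_subset fresh
  by (auto simp: is_root_def add_root_arcs_def) (metis is_root_def)

lemma add_root_arcs_reach:
  assumes "dag VP A" "x \<in> VP"
  shows "(r, x) \<in> A\<^sub>r\<^sup>*"
proof -
  obtain \<rho> where "is_root VP A \<rho>" "(\<rho>, x) \<in> A\<^sup>*"
    using dag_root_above[OF assms] .
  moreover have "A\<^sup>* \<subseteq> A\<^sub>r\<^sup>*" by (rule rtrancl_mono) (auto simp: add_root_arcs_def)
  ultimately show ?thesis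
    by (auto simp: add_root_arcs_def intro: converse_rtrancl_into_rtrancl)
qed

lemma dpath_add_root_arcs_below_root:
  assumes "dpath A\<^sub>r xs" "hd xs \<in> VP"
  shows "dpath A xs \<and> set xs \<subseteq> VP"
  using dpath_confined[OF assms] add_root_arcs_from_old add_root_arcs_subset by blast

lemma dpath_add_root_arcs_from_root:
  assumes "dpath A\<^sub>r (r # ys)" "ys \<noteq> []"
  shows "dpath A ys \<and> set ys \<subseteq> VP \<and> is_root VP A (hd ys)"
proof -
  have "(r, hd ys) \<in> A\<^sub>r" "dpath A\<^sub>r ys" using assms by (auto simp: dpath_Cons)
  moreover have "(r, hd ys) \<notin> A" using arcs fresh by auto
  ultimately have "is_root VP A (hd ys)" by (auto simp: add_root_arcs_def)
  then show ?thesis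
    using dpath_add_root_arcs_below_root[OF \<open>dpath A\<^sub>r ys\<close>] by (simp add: is_root_def)
qed

lemma dag_add_root_arcs:
  assumes "dag VP A"
  shows "dag (insert r VP) A\<^sub>r"
proof -
  have "(x, y) \<in> A\<^sup>+" if "(x, y) \<in> A\<^sub>r\<^sup>+" "x \<in> VP" for x y
    using that
  proof (induction rule: trancl_induct)
    case (step y z)
    then have "y \<in> VP" using arcs trancl_subset_Sigma by blast
    with step show ?case using add_root_arcs_from_old by (meson trancl.trancl_into_trancl)
  qed (use add_root_arcs_from_old in blast)
  moreover have "x \<in> VP" if "(x, x) \<in> A\<^sub>r\<^sup>+" for x
    using that add_root_arcs_subset by (auto dest!: tranclD2)
  ultimately have "acyclic A\<^sub>r" using assms unfolding acyclic_def dag_def by blast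
  then show ?thesis using assms add_root_arcs_subset by (auto simp: dag_def)
qed

lemma depth_add_root_arcs:
  assumes "depth VP A k"
  shows "depth (insert r VP) A\<^sub>r (Suc k)"
  unfolding depth_def
proof (intro conjI allI impI)
  obtain xs where xs: "dpath A xs" "set xs \<subseteq> VP" "length xs = k"
    using assms unfolding depth_def by blast
  then have "(r, hd xs) \<in> A\<^sub>r"
    using depth_longest_path_from_root[OF arcs assms] by (simp add: add_root_arcs_def)
  moreover have "dpath A\<^sub>r xs" using xs(1) by (rule dpath_mono[rotated]) (auto simp: add_root_arcs_def)
  ultimately show "\<exists>xs. dpath A\<^sub>r xs \<and> set xs \<subseteq> insert r VP \<and> length xs = Suc k"
    using xs by (intro exI[of _ "r # xs"]) (auto simp: dpath_Cons)
next
  fix xs assume xs: "dpath A\<^sub>r xs \<and> set xs \<subseteq> insert r VP"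
  consider "hd xs \<in> VP" | "xs = [r]" | ys where "xs = r # ys" "ys \<noteq> []"
    using xs dpath_imp_nonempty hd_in_set by (metis insertE list.collapse subsetD)
  then show "length xs \<le> Suc k"
  proof cases
    case 1
    then have "dpath A xs \<and> set xs \<subseteq> VP" using xs dpath_add_root_arcs_below_root by blast
    then show ?thesis using assms unfolding depth_def by (simp add: le_SucI)
  next
    case (3 ys)
    then have "dpath A ys \<and> set ys \<subseteq> VP" using xs dpath_add_root_arcs_from_root by blast
    then show ?thesis using assms 3 unfolding depth_def by simp
  qed simp
qed

lemma arc_ok_add_root_to_root_label:
  "arc_ok (insert r VP) A\<^sub>r (org(r := v)) v' v"
  unfolding arc_ok_def is_root_add_root_arcs_iff
  by (metis dpath_imp_nonempty fun_upd_same list.set_sel(1))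

lemma arc_ok_add_root_from_root:
  assumes "dag VP A" "u' \<in> VP"
  shows "arc_ok (insert r VP) A\<^sub>r (org(r := v)) r (org u')"
proof -
  have "descendant A\<^sub>r r u'" using add_root_arcs_reach[OF assms] by (rule rtrancl_imp_descendant)
  moreover have "(org(r := v)) u' = org u'" using assms(2) fresh by auto
  ultimately show ?thesis unfolding arc_ok_def using assms(2) by blast
qed

lemma arc_ok_add_root_lift:
  assumes "v' \<in> VP" "arc_ok VP A org v' u"
  shows "arc_ok (insert r VP) A\<^sub>r (org(r := v)) v' u"
proof -
  have org_old: "(org(r := v)) x = org x" if "x \<in> VP" for x using that fresh by auto
  have "\<exists>u'\<in>set xs. (org(r := v)) u' = u"
    if xs: "dpath A\<^sub>r xs" "is_root (insert r VP) A\<^sub>r (hd xs)" "last xs = v'"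
      and paths: "\<forall>xs. dpath A xs \<and> is_root VP A (hd xs) \<and> last xs = v' \<longrightarrow>
                    (\<exists>u'\<in>set xs. org u' = u)" for xs
  proof -
    have "hd xs = r" using xs(2) is_root_add_root_arcs_iff by blast
    then obtain ys where ys: "xs = r # ys" "ys \<noteq> []"
      using xs(1,3) assms(1) fresh dpath_imp_nonempty by (metis last_ConsL list.collapse)
    then have "dpath A ys" "set ys \<subseteq> VP" "is_root VP A (hd ys)" "last ys = v'"
      using dpath_add_root_arcs_from_root xs(1,3) by auto
    then obtain u' where "u' \<in> set ys" "u' \<in> VP" "org u' = u" using paths by blast
    with ys org_old show ?thesis by (intro bexI[of _ u']) simp_all
  qed
  moreover have "descendant A\<^sub>r v' u'" if "descendant A v' u'" for u'
    using that by (rule descendant_mono[rotated]) (auto simp: add_root_arcs_def)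
  ultimately show ?thesis using assms(2) org_old unfolding arc_ok_def by fastforce
qed

end

lemma valid_decomp_add_root:
  assumes val: "valid_decomp W (restr E W) VP A org"
    and r: "r \<notin> VP" and E: "E \<subseteq> insert v W \<times> insert v W"
  shows "valid_decomp (insert v W) E (insert r VP) (add_root_arcs r VP A) (org(r := v))"
  unfolding valid_decomp_iff_arc_ok
proof (intro conjI ballI allI impI)
  let ?A = "add_root_arcs r VP A" and ?org = "org(r := v)"
  have dag: "dag VP A" and surj: "org ` VP = W"
    and old: "\<And>v' u. v' \<in> VP \<Longrightarrow> (org v', u) \<in> restr E W \<Longrightarrow> arc_ok VP A org v' u"
    using val by (auto simp: valid_decomp_iff_arc_ok)
  then have arcs: "A \<subseteq> VP \<times> VP" by (simp add: dag_def)
  have org_old: "?org x = org x" if "x \<in> VP" for x using that r by auto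
  show "dag (insert r VP) ?A" using dag_add_root_arcs[OF arcs r dag] .
  have "?org ` VP = org ` VP" by (rule image_cong[OF refl org_old])
  then show "?org ` insert r VP = insert v W" using surj by (simp only: image_insert fun_upd_same)
  fix v' u assume v': "v' \<in> insert r VP" and e: "(?org v', u) \<in> E"
  show "arc_ok (insert r VP) ?A ?org v' u"
  proof (cases "u = v")
    case True
    then show ?thesis using arc_ok_add_root_to_root_label[OF arcs r] by simp
  next
    case False
    then have "u \<in> W" using e E by auto
    then obtain u' where u': "u' \<in> VP" "u = org u'" using surj by blast
    show ?thesis
    proof (cases "v' = r")
      case True
      then show ?thesis using arc_ok_add_root_from_root[OF arcs r dag u'(1)] u'(2) by simp
    next
      case False
      with v' have "v' \<in> VP" by simp
      with e \<open>u \<in> W\<close> surj org_old have "(org v', u) \<in> restr E W" by (auto simp: restr_def)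
      with \<open>v' \<in> VP\<close> show ?thesis by (intro arc_ok_add_root_lift[OF arcs r] old)
    qed
  qed
qed

lemma disjoint_family_on_glue:
  assumes "disjoint_family_on VP I"
  obtains f where "\<And>i x. i \<in> I \<Longrightarrow> x \<in> VP i \<Longrightarrow> f x = g i x"
proof -
  have "g (SOME j. j \<in> I \<and> x \<in> VP j) x = g i x" if ix: "i \<in> I" "x \<in> VP i" for i x
  proof -
    let ?j = "SOME j. j \<in> I \<and> x \<in> VP j"
    have "?j \<in> I \<and> x \<in> VP ?j" by (rule someI[of "\<lambda>j. j \<in> I \<and> x \<in> VP j" i]) (simp add: ix)
    then have "?j = i" using ix disjoint_family_onD[OF assms] by blast
    then show ?thesis by simp
  qed
  then show thesis by (rule that)
qed

context
  fixes I and VP :: "'i \<Rightarrow> 'b set" and A :: "'i \<Rightarrow> ('b \<times> 'b) set"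
  assumes arcs: "\<And>i. i \<in> I \<Longrightarrow> A i \<subseteq> VP i \<times> VP i" and disj: "disjoint_family_on VP I"
begin

lemma UN_arcs_from_piece:
  assumes "(x, y) \<in> (\<Union>j\<in>I. A j)" "i \<in> I" "x \<in> VP i"
  shows "(x, y) \<in> A i"
proof -
  obtain j where "j \<in> I" "(x, y) \<in> A j" using assms(1) by blast
  moreover from this have "j = i"
    using arcs disj assms(2,3) unfolding disjoint_family_on_def by blast
  ultimately show ?thesis by simp
qed

lemma dpath_UN_confined:
  assumes "dpath (\<Union>j\<in>I. A j) xs" "i \<in> I" "hd xs \<in> VP i"
  shows "dpath (A i) xs \<and> set xs \<subseteq> VP i"
  using dpath_confined[OF assms(1,3)] UN_arcs_from_piece[OF _ assms(2)] arcs[OF assms(2)] by blast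

lemma acyclic_UN:
  assumes "\<And>i. i \<in> I \<Longrightarrow> acyclic (A i)"
  shows "acyclic (\<Union>i\<in>I. A i)"
proof -
  have "\<exists>i\<in>I. (x, y) \<in> (A i)\<^sup>+" if "(x, y) \<in> (\<Union>i\<in>I. A i)\<^sup>+" for x y
    using that
  proof (induction rule: trancl_induct)
    case (step y z)
    then obtain i where i: "i \<in> I" "(x, y) \<in> (A i)\<^sup>+" by blast
    then have "y \<in> VP i" using arcs trancl_subset_Sigma by blast
    then have "(y, z) \<in> A i" using UN_arcs_from_piece step(2) i(1) by blast
    then show ?case using i by (meson trancl.trancl_into_trancl)
  qed blast
  then show ?thesis using assms unfolding acyclic_def by blast
qed

lemma arc_ok_UN:
  assumes "i \<in> I" "v' \<in> VP i" "arc_ok (VP i) (A i) org v' u"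
  shows "arc_ok (\<Union>i\<in>I. VP i) (\<Union>i\<in>I. A i) org v' u"
proof -
  have "\<exists>u'\<in>set xs. org u' = u"
    if xs: "dpath (\<Union>i\<in>I. A i) xs" "is_root (\<Union>i\<in>I. VP i) (\<Union>i\<in>I. A i) (hd xs)" "last xs = v'"
      and paths: "\<forall>xs. dpath (A i) xs \<and> is_root (VP i) (A i) (hd xs) \<and> last xs = v' \<longrightarrow>
                    (\<exists>u'\<in>set xs. org u' = u)" for xs
  proof -
    obtain j where j: "j \<in> I" "hd xs \<in> VP j" using xs(2) by (auto simp: is_root_def)
    then have p: "dpath (A j) xs" "set xs \<subseteq> VP j" using dpath_UN_confined xs(1) by auto
    then have "v' \<in> VP j" using xs(3) dpath_imp_nonempty last_in_set by blast
    then have "j = i" using disj assms(1,2) j(1) unfolding disjoint_family_on_def by blast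
    moreover have "is_root (VP j) (A j) (hd xs)" using xs(2) j unfolding is_root_def by blast
    ultimately show ?thesis using paths p xs(3) by blast
  qed
  moreover have "descendant (\<Union>i\<in>I. A i) v' u'" if "descendant (A i) v' u'" for u'
    using that by (rule descendant_mono[rotated]) (use assms(1) in blast)
  ultimately show ?thesis using assms unfolding arc_ok_def by blast
qed

lemma depth_UN:
  assumes "finite I" "I \<noteq> {}" and dep: "\<And>i. i \<in> I \<Longrightarrow> depth (VP i) (A i) (k i)"
  shows "depth (\<Union>i\<in>I. VP i) (\<Union>i\<in>I. A i) (Max (k ` I))"
  unfolding depth_def
proof (intro conjI allI impI)
  have "Max (k ` I) \<in> k ` I" using assms(1,2) by (intro Max_in) auto
  then obtain i where i: "i \<in> I" "k i = Max (k ` I)" by auto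
  obtain xs where xs: "dpath (A i) xs" "set xs \<subseteq> VP i" "length xs = k i"
    using dep[OF i(1)] unfolding depth_def by blast
  have "dpath (\<Union>i\<in>I. A i) xs" using xs(1) by (rule dpath_mono[rotated]) (use i in blast)
  moreover have "set xs \<subseteq> (\<Union>i\<in>I. VP i)" using xs(2) i by blast
  ultimately show "\<exists>xs. dpath (\<Union>i\<in>I. A i) xs \<and> set xs \<subseteq> (\<Union>i\<in>I. VP i) \<and> length xs = Max (k ` I)"
    using xs(3) i(2) by (intro exI[of _ xs]) simp
next
  fix xs assume xs: "dpath (\<Union>i\<in>I. A i) xs \<and> set xs \<subseteq> (\<Union>i\<in>I. VP i)"
  then obtain i where i: "i \<in> I" "hd xs \<in> VP i"
    using dpath_imp_nonempty hd_in_set by blast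
  then have "length xs \<le> k i" using xs dpath_UN_confined dep unfolding depth_def by blast
  also have "k i \<le> Max (k ` I)" using assms(1) i by simp
  finally show "length xs \<le> Max (k ` I)" .
qed

end

lemma valid_decomp_UN:
  assumes "finite I"
    and val: "\<And>i. i \<in> I \<Longrightarrow> valid_decomp (Vs i) (restr E (Vs i)) (VP i) (A i) org"
    and disj: "disjoint_family_on VP I"
    and closed: "\<And>i x u. i \<in> I \<Longrightarrow> x \<in> Vs i \<Longrightarrow> (x, u) \<in> E \<Longrightarrow> u \<in> Vs i"
  shows "valid_decomp (\<Union>i\<in>I. Vs i) E (\<Union>i\<in>I. VP i) (\<Union>i\<in>I. A i) org"
  unfolding valid_decomp_iff_arc_ok
proof (intro conjI ballI allI impI)
  have dag: "dag (VP i) (A i)" if "i \<in> I" for i using val[OF that] by (simp add: valid_decomp_def)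
  then have arcs: "A i \<subseteq> VP i \<times> VP i" if "i \<in> I" for i using that by (simp add: dag_def)
  show "dag (\<Union>i\<in>I. VP i) (\<Union>i\<in>I. A i)"
    using dag acyclic_UN[OF arcs disj] \<open>finite I\<close> arcs unfolding dag_def by blast
  show "org ` (\<Union>i\<in>I. VP i) = (\<Union>i\<in>I. Vs i)"
    using val by (simp add: valid_decomp_def image_UN)
  fix v' u assume "v' \<in> (\<Union>i\<in>I. VP i)" and e: "(org v', u) \<in> E"
  then obtain i where i: "i \<in> I" "v' \<in> VP i" by blast
  with val have "org v' \<in> Vs i" by (auto simp: valid_decomp_def)
  with closed i e have "(org v', u) \<in> restr E (Vs i)" by (auto simp: restr_def)
  with val i have "arc_ok (VP i) (A i) org v' u" by (auto simp: valid_decomp_iff_arc_ok)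
  then show "arc_ok (\<Union>i\<in>I. VP i) (\<Union>i\<in>I. A i) org v' u"
    using arc_ok_UN[OF arcs disj, of i v' org u] i by blast
qed

lemma fragment_subset: "R \<in> fragments V E \<Longrightarrow> R \<subseteq> V"
  by (simp add: fragments_def rooted_in_def)

lemma fragment_nonempty: "R \<in> fragments V E \<Longrightarrow> R \<noteq> {}"
  by (auto simp: fragments_def rooted_in_def)

lemma finite_fragments: "finite V \<Longrightarrow> finite (fragments V E)"
  using fragment_subset by (metis Pow_iff finite_Pow_iff finite_subset subsetI)

lemma Union_fragments:
  assumes "finite V"
  shows "\<Union>(fragments V E) = V"
proof (intro equalityI subsetI)
  fix x assume "x \<in> V"
  let ?rooted = "{R. rooted_in V E R}"
  have "?rooted \<subseteq> Pow V" by (auto simp: rooted_in_def)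
  then have "finite ?rooted" using assms by (meson finite_Pow_iff finite_subset)
  moreover have "{x} \<in> ?rooted" using \<open>x \<in> V\<close> by (auto simp: rooted_in_def)
  ultimately obtain R where "R \<in> ?rooted" "{x} \<subseteq> R" "\<forall>R'\<in>?rooted. R \<subseteq> R' \<longrightarrow> R = R'"
    using finite_has_maximal2 by metis
  then show "x \<in> \<Union>(fragments V E)" by (auto simp: fragments_def)
qed (use fragment_subset in blast)

lemma fragment_closed:
  assumes "E \<subseteq> V \<times> V" "R \<in> fragments V E" "x \<in> R" "(x, u) \<in> E"
  shows "u \<in> R"
proof -
  from assms(2) obtain r where r: "r \<in> R" "\<forall>y\<in>R. (r, y) \<in> (restr E V)\<^sup>*" "R \<subseteq> V"
    and maximal: "\<forall>R'. rooted_in V E R' \<and> R \<subseteq> R' \<longrightarrow> R' = R"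
    by (auto simp: fragments_def rooted_in_def)
  have "(x, u) \<in> restr E V" using assms(1,4) by (auto simp: restr_def)
  then have "(r, u) \<in> (restr E V)\<^sup>*" using r assms(3) by (meson rtrancl.rtrancl_into_rtrancl)
  then have "rooted_in V E (insert u R)" using r assms(1,4) unfolding rooted_in_def by auto
  then show ?thesis using maximal by blast
qed

definition has_decomp_in :: "nat set \<Rightarrow> 'a set \<Rightarrow> ('a \<times> 'a) set \<Rightarrow> nat \<Rightarrow> bool" where
  "has_decomp_in L V E k \<longleftrightarrow> (\<exists>VP A org. VP \<subseteq> L \<and> valid_decomp V E VP A org \<and> depth VP A k)"

lemma has_decomp_in_singleton:
  assumes "E \<subseteq> {v} \<times> {v}" "p \<in> L"
  shows "has_decomp_in L {v} E 1"
proof -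
  have "valid_decomp {v} E {p} {} (\<lambda>_. v)"
    unfolding valid_decomp_def
  proof (intro conjI ballI allI impI disjI2)
    fix v' u xs assume "((\<lambda>_. v) v', u) \<in> E" "dpath {} xs \<and> is_root {p} {} (hd xs) \<and> last xs = v'"
    then show "\<exists>u'\<in>set xs. v = u" using assms(1) dpath_imp_nonempty hd_in_set by blast
  qed (simp_all add: dag_def acyclic_def)
  moreover have "depth {p} {} 1"
    unfolding depth_def by (auto simp: dpath_empty_length intro!: exI[of _ "[p]"])
  ultimately show ?thesis using assms(2) unfolding has_decomp_in_def by blast
qed

lemma has_decomp_in_insert:
  assumes "has_decomp_in L W (restr E W) k" "r \<notin> L" "E \<subseteq> insert v W \<times> insert v W"
  shows "has_decomp_in (insert r L) (insert v W) E (Suc k)"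
proof -
  obtain VP A org where dec: "VP \<subseteq> L" "valid_decomp W (restr E W) VP A org" "depth VP A k"
    using assms(1) unfolding has_decomp_in_def by blast
  have r: "r \<notin> VP" using dec(1) assms(2) by blast
  have "A \<subseteq> VP \<times> VP" using dec(2) by (simp add: valid_decomp_def dag_def)
  then have "depth (insert r VP) (add_root_arcs r VP A) (Suc k)"
    using r dec(3) by (rule depth_add_root_arcs)
  moreover have "valid_decomp (insert v W) E (insert r VP) (add_root_arcs r VP A) (org(r := v))"
    using dec(2) r assms(3) by (rule valid_decomp_add_root)
  moreover have "insert r VP \<subseteq> insert r L" using dec(1) by blast
  ultimately show ?thesis unfolding has_decomp_in_def by blast
qed

lemma has_decomp_in_mono: "L \<subseteq> L' \<Longrightarrow> has_decomp_in L V E k \<Longrightarrow> has_decomp_in L' V E k"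
  unfolding has_decomp_in_def by blast

lemma has_decomp_in_UN:
  assumes "finite I" "I \<noteq> {}" and disj: "disjoint_family_on L I"
    and "\<And>i. i \<in> I \<Longrightarrow> has_decomp_in (L i) (Vs i) (restr E (Vs i)) (k i)"
    and closed: "\<And>i x u. i \<in> I \<Longrightarrow> x \<in> Vs i \<Longrightarrow> (x, u) \<in> E \<Longrightarrow> u \<in> Vs i"
  shows "has_decomp_in (\<Union>i\<in>I. L i) (\<Union>i\<in>I. Vs i) E (Max (k ` I))"
proof -
  from assms(4) have "\<forall>i\<in>I. \<exists>VP A org. VP \<subseteq> L i \<and>
      valid_decomp (Vs i) (restr E (Vs i)) VP A org \<and> depth VP A (k i)"
    unfolding has_decomp_in_def by blast
  then obtain VP A org where dec: "\<And>i. i \<in> I \<Longrightarrow> VP i \<subseteq> L i \<and>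
      valid_decomp (Vs i) (restr E (Vs i)) (VP i) (A i) (org i) \<and> depth (VP i) (A i) (k i)"
    unfolding bchoice_iff by blast
  have disjVP: "disjoint_family_on VP I"
    using disj dec unfolding disjoint_family_on_def by blast
  obtain org\<^sub>U where "\<And>i x. i \<in> I \<Longrightarrow> x \<in> VP i \<Longrightarrow> org\<^sub>U x = org i x"
    using disjoint_family_on_glue[OF disjVP] by blast
  then have val: "valid_decomp (Vs i) (restr E (Vs i)) (VP i) (A i) org\<^sub>U" if "i \<in> I" for i
    using dec[OF that] valid_decomp_cong[of "VP i" org\<^sub>U "org i"] that by blast
  then have arcs: "A i \<subseteq> VP i \<times> VP i" if "i \<in> I" for i
    using that by (simp add: valid_decomp_def dag_def)
  have "depth (\<Union>i\<in>I. VP i) (\<Union>i\<in>I. A i) (Max (k ` I))"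
    using depth_UN[OF arcs disjVP assms(1,2)] dec by blast
  moreover have "(\<Union>i\<in>I. VP i) \<subseteq> (\<Union>i\<in>I. L i)" using dec by blast
  moreover have "valid_decomp (\<Union>i\<in>I. Vs i) E (\<Union>i\<in>I. VP i) (\<Union>i\<in>I. A i) org\<^sub>U"
    using assms(1) val disjVP closed by (rule valid_decomp_UN)
  ultimately show ?thesis unfolding has_decomp_in_def by blast
qed

lemma has_decomp_in_fragments:
  assumes "finite V" "V \<noteq> {}" "E \<subseteq> V \<times> V" "inj (g :: nat \<Rightarrow> nat)"
    and IH: "\<And>R h. R \<in> fragments V E \<Longrightarrow> inj (h :: nat \<Rightarrow> nat) \<Longrightarrow>
      has_decomp_in (range h) R (restr E R) (d R)"
  shows "has_decomp_in (range g) V E (Max (d ` fragments V E))"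
proof -
  let ?F = "fragments V E"
  have finF: "finite ?F" using assms(1) by (rule finite_fragments)
  then obtain c :: "'a set \<Rightarrow> nat" where c: "inj_on c ?F"
    using finite_imp_inj_to_nat_seg by blast
  define h where "h R = g \<circ> (\<lambda>n. prod_encode (c R, n))" for R
  have inj_h: "inj (h R)" for R
    unfolding h_def by (rule inj_compose[OF assms(4)]) (simp add: inj_on_def)
  have disj_h: "disjoint_family_on (\<lambda>R. range (h R)) ?F"
    unfolding disjoint_family_on_def
  proof (intro ballI impI)
    fix R R' assume "R \<in> ?F" "R' \<in> ?F" "R \<noteq> R'"
    then have "c R \<noteq> c R'" using c by (meson inj_onD)
    then have "h R n \<noteq> h R' m" for n m
      unfolding h_def comp_def using assms(4) by (simp add: inj_eq)
    then show "range (h R) \<inter> range (h R') = {}" by blast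
  qed
  have "has_decomp_in (\<Union>R\<in>?F. range (h R)) (\<Union>R\<in>?F. R) E (Max (d ` ?F))"
  proof (rule has_decomp_in_UN[OF finF _ disj_h])
    show "?F \<noteq> {}" using Union_fragments[OF assms(1)] assms(2) by auto
    show "has_decomp_in (range (h R)) R (restr E R) (d R)" if "R \<in> ?F" for R
      using IH[OF that inj_h] .
    show "u \<in> R" if "R \<in> ?F" "x \<in> R" "(x, u) \<in> E" for R x u
      using fragment_closed[OF assms(3) that] .
  qed
  moreover have "(\<Union>R\<in>?F. range (h R)) \<subseteq> range g" by (auto simp: h_def)
  ultimately show ?thesis
    using Union_fragments[OF assms(1)] has_decomp_in_mono by (metis image_ident)
qed

lemma has_decomp_in_delete:
  assumes "v \<in> V" "E \<subseteq> V \<times> V" "inj (g :: nat \<Rightarrow> nat)"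
    and IH: "\<And>h. inj (h :: nat \<Rightarrow> nat) \<Longrightarrow> has_decomp_in (range h) (V - {v}) (restr E (V - {v})) k"
  shows "has_decomp_in (range g) V E (Suc k)"
proof -
  have "range g = insert (g 0) (range (g \<circ> Suc))"
    by (auto simp: image_iff) (metis not0_implies_Suc)
  moreover have "g 0 \<notin> range (g \<circ> Suc)" using assms(3) by (auto simp: inj_eq)
  moreover have "inj (g \<circ> Suc)" using assms(3) by (simp add: inj_compose)
  ultimately show ?thesis
    using has_decomp_in_insert[OF IH, of "g \<circ> Suc" "g 0" v] assms(1,2) by (simp add: insert_absorb)
qed

declare ddp.simps [simp del]

lemma has_decomp_in_range:
  assumes "finite V" "V \<noteq> {}" "E \<subseteq> V \<times> V" "inj (g :: nat \<Rightarrow> nat)"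
  shows "has_decomp_in (range g) V E (ddp V E)"
  using assms
proof (induction V E arbitrary: g rule: ddp.induct)
  case (1 V E)
  consider (single) "card V = 1" | (delete) "card V \<noteq> 1" "card (fragments V E) = 1"
    | (split) "card V \<noteq> 1" "card (fragments V E) \<noteq> 1" by blast
  then show ?case
  proof cases
    case single
    then obtain v where "V = {v}" by (rule card_1_singletonE)
    then show ?thesis
      using "1.prems"(3) has_decomp_in_singleton[of E v "g 0"] by (simp add: ddp.simps)
  next
    case delete
    let ?d = "\<lambda>v. ddp (V - {v}) (restr E (V - {v}))"
    have "Min (?d ` V) \<in> ?d ` V" using "1.prems"(1,2) by (intro Min_in) auto
    then obtain v where v: "v \<in> V" "?d v = Min (?d ` V)" by auto
    have "V \<noteq> {v}" using delete(1) by auto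
    then have "V - {v} \<noteq> {}" using v(1) by blast
    then have "has_decomp_in (range h) (V - {v}) (restr E (V - {v})) (?d v)"
      if "inj (h :: nat \<Rightarrow> nat)" for h
      using "1.IH"(1)[OF _ delete v(1) _ _ _ that] "1.prems"(1) by (auto simp: restr_def)
    then have "has_decomp_in (range g) V E (Suc (?d v))"
      using has_decomp_in_delete[OF v(1) "1.prems"(3,4)] by blast
    moreover have "ddp V E = Suc (?d v)" using "1.prems"(1,2) delete v(2) by (subst ddp.simps) simp
    ultimately show ?thesis by simp
  next
    case split
    have "has_decomp_in (range h) R (restr E R) (ddp R (restr E R))"
      if "R \<in> fragments V E" "inj (h :: nat \<Rightarrow> nat)" for R h
      using "1.IH"(2)[OF _ split that(1) _ _ _ that(2)] "1.prems"(1) fragment_subset[OF that(1)]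
        fragment_nonempty[OF that(1)] by (auto simp: restr_def intro: finite_subset)
    then have "has_decomp_in (range g) V E (Max ((\<lambda>R. ddp R (restr E R)) ` fragments V E))"
      by (rule has_decomp_in_fragments[OF "1.prems"])
    moreover have "ddp V E = Max ((\<lambda>R. ddp R (restr E R)) ` fragments V E)"
      using "1.prems"(1,2) split by (subst ddp.simps) simp
    ultimately show ?thesis by simp
  qed
qed

theorem theorem3p2:
  fixes V :: "'a set" and E :: "('a \<times> 'a) set" and k :: nat
  assumes "finite V" and "V \<noteq> {}" and "E \<subseteq> V \<times> V"
    and "ddp V E = k"
  shows "\<exists>(VP :: nat set) A org. valid_decomp V E VP A org \<and> depth VP A k"
  using has_decomp_in_range[OF assms(1-3) inj_on_id] assms(4)
  unfolding has_decomp_in_def by blast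

end
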